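(* Let $n\ge2$ and let $\mathcal{C}(n)=\{\mathcal{C}(n,d')\}_{d'>0}$ be a family of spherical codes in $S^{n-1}$, where $\mathcal{C}(n,d')$ has minimum distance at least $d'$ and cardinality $M(n,d')$, whose asymptotic center density $\overline{\Delta}_c(\mathcal{C}(n))=\lim_{d\to0}\frac{M(n,d)}{\mathbb{S}_n}\left(\frac d2\right)^{n-1}$ exists. Let $\mathrm{SCHF}[2n;\mathcal{C}(n)]$ be the family of spherical codes in $S^{2n-1}$ built from $\mathcal{C}(n)$ by Hopf foliations (see context), with cardinalities $M(2n,d)$. Then its asymptotic center density is $$\overline{\Delta}_c(\mathrm{SCHF}[2n;\mathcal{C}(n)]):=\lim_{d\to0}\frac{M(2n,d)}{\mathbb{S}_{2n}}\left(\frac d2\right)^{2n-1}=\frac12\left(\overline{\Delta}_c(\mathcal{C}(n))\right)^2.$$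
   Context: $\mathbb{S}_m=\frac{m\pi^{m/2}}{\Gamma(1+m/2)}$ is the surface area of the unit sphere $S^{m-1}\subset\mathbb{R}^m$. A spherical code in $S^{m-1}$ with minimum distance at least $d$ is a finite subset of $S^{m-1}$ whose points are pairwise at Euclidean distance $\ge d$ (for $d'>2$, including the formal value $d'=+\infty$, such a code has one point). Construction $\mathrm{SCHF}[2n;\mathcal{C}(n)]$ for $d\in(0,2]$: put $\Delta\eta=2\arcsin(d/2)$, $t=\lfloor\pi/(4\arcsin(d/2))\rfloor$ and $\eta_i=\pi/4+i\Delta\eta$ for integers $i$ with $|i|\le\lfloor t/2\rfloor$. The code is the union over these $i$ of $\{(\cos\eta_i\,\mathbf{x};\sin\eta_i\,\mathbf{y}):\mathbf{x}\in\mathcal{C}(n,d/\cos\eta_i),\ \mathbf{y}\in\mathcal{C}(n,d/\sin\eta_i)\}\subset\mathbb{R}^{2n}$, with $d/0:=+\infty$; its cardinality is $M(2n,d)=\sum_{|i|\le\lfloor t/2\rfloor}M(n,d/\cos\eta_i)\,M(n,d/\sin\eta_i)$. *)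

theory Defs
  imports "HOL-Analysis.Analysis"
begin

text \<open>Surface area of the unit sphere in R^m.\<close>
definition sphere_area :: "nat \<Rightarrow> real" where
  "sphere_area m = real m * pi powr (real m / 2) / Gamma (1 + real m / 2)"

definition spherical_code :: "real \<Rightarrow> ('a::real_normed_vector) set \<Rightarrow> bool" where
  "spherical_code d A \<longleftrightarrow> finite A \<and> A \<subseteq> sphere 0 1 \<and>
     (\<forall>x\<in>A. \<forall>y\<in>A. x \<noteq> y \<longrightarrow> d \<le> dist x y)"

text \<open>Cardinality M(n, d / c) of the component code, with the convention
  d / 0 = +infinity and M(n, +infinity) = 1.\<close>
definition card_div :: "(real \<Rightarrow> nat) \<Rightarrow> real \<Rightarrow> real \<Rightarrow> nat" where
  "card_div M d c = (if c = 0 then 1 else M (d / c))"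

text \<open>Cardinality M(2n,d) of SCHF[2n; C(n)] at minimum distance d, for d in (0,2].\<close>
definition schf_card :: "(real \<Rightarrow> nat) \<Rightarrow> real \<Rightarrow> nat" where
  "schf_card M d =
     (let \<Delta> = 2 * arcsin (d / 2);
          t = \<lfloor>pi / (4 * arcsin (d / 2))\<rfloor>;
          \<eta> = (\<lambda>i::int. pi / 4 + of_int i * \<Delta>)
      in \<Sum>i\<in>{- (t div 2) .. t div 2}. card_div M d (cos (\<eta> i)) * card_div M d (sin (\<eta> i)))"

end

theory Submission
  imports Defs
begin

(* Write m = n - 1 and M(x) for the size of the component code at minimum distance x, so that
   M(x) x^m -> L = D S_n 2^m. The SCHF code has M(d / cos eta_i) M(d / sin eta_i) points on the layer
   eta_i = pi/4 + i Delta, Delta = 2 arcsin (d/2) ~ d. The quantity psi_d(c) = d^m M(d/c) equals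
   c^m M(d/c) (d/c)^m, so it tends to L c^m uniformly for c bounded away from 0, and it is bounded for
   all c in [0, 1] since a code of minimum distance b has at most N(b) points (compactness of the
   sphere). Hence Delta d^(2m) M(2n, d) = Delta sum_i psi_d(cos eta_i) psi_d(sin eta_i) is a Riemann
   sum converging to L^2 int_0^(pi/2) (sin eta cos eta)^m = L^2 B(n/2, n/2) / 2, and the identity
   S_n^2 B(n/2, n/2) / 2 = S_(2n) turns the normalised limit into D^2 / 2. *)

lemma sum_int_telescope:
  fixes f :: "int \<Rightarrow> 'a::ab_group_add"
  shows "a - 1 \<le> b \<Longrightarrow> (\<Sum>i\<in>{a..b}. f (i + 1) - f i) = f (b + 1) - f a"
proof (induction b rule: int_ge_induct)
  case (step b)
  have "{a..b + 1} = insert (b + 1) {a..b}" using step.hyps by auto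
  with step.IH show ?case by simp
qed simp

lemma integral_midpoint_error:
  fixes f :: "real \<Rightarrow> real"
  assumes lip: "L-lipschitz_on UNIV f" and \<Delta>: "0 \<le> \<Delta>"
  shows "\<bar>integral {x - \<Delta> / 2..x + \<Delta> / 2} f - \<Delta> * f x\<bar> \<le> L * (\<Delta> / 2) * \<Delta>"
proof -
  have cont: "continuous_on {x - \<Delta> / 2..x + \<Delta> / 2} (\<lambda>y. f y - f x)"
    using lipschitz_on_continuous_on[OF lip] by (intro continuous_intros) (auto intro: continuous_on_subset)
  have "integral {x - \<Delta> / 2..x + \<Delta> / 2} (\<lambda>y. f y - f x) = integral {x - \<Delta> / 2..x + \<Delta> / 2} f - \<Delta> * f x"
    using cont \<Delta> lipschitz_on_continuous_on[OF lip]
    by (subst integral_diff) (auto intro: integrable_continuous_real continuous_on_subset)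
  moreover have "\<bar>f y - f x\<bar> \<le> L * (\<Delta> / 2)" if "y \<in> {x - \<Delta> / 2..x + \<Delta> / 2}" for y
  proof -
    have "\<bar>f y - f x\<bar> \<le> L * \<bar>y - x\<bar>" using lipschitz_onD[OF lip, of y x] by (simp add: dist_real_def)
    also have "\<dots> \<le> L * (\<Delta> / 2)"
      using that lipschitz_on_nonneg[OF lip] by (intro mult_left_mono) (auto simp: abs_if)
    finally show ?thesis .
  qed
  ultimately show ?thesis
    using integral_bound[OF _ cont, of "L * (\<Delta> / 2)"] \<Delta> by simp
qed

lemma integral_eq_sum_cells:
  fixes f :: "real \<Rightarrow> real" and c \<Delta> :: real and k :: int
  assumes cont: "continuous_on UNIV f" and \<Delta>: "0 \<le> \<Delta>" and k: "0 \<le> k"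
  shows "integral {c - (k + 1/2) * \<Delta>..c + (k + 1/2) * \<Delta>} f
    = (\<Sum>i\<in>{-k..k}. integral {c + i * \<Delta> - \<Delta> / 2..c + i * \<Delta> + \<Delta> / 2} f)"
proof -
  define p where "p i = c + (of_int i - 1/2) * \<Delta>" for i :: int
  define G where "G x = integral {p (-k)..x} f" for x
  have p_mono: "p i \<le> p j" if "i \<le> j" for i j
    using that \<Delta> by (auto simp: p_def intro: mult_right_mono)
  have "integral {c + i * \<Delta> - \<Delta> / 2..c + i * \<Delta> + \<Delta> / 2} f = G (p (i + 1)) - G (p i)"
    if "-k \<le> i" for i
  proof -
    have "integral {p (-k)..p i} f + integral {p i..p (i + 1)} f = G (p (i + 1))"
      unfolding G_def using p_mono[of "-k" i] p_mono[of i "i + 1"] that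
      by (intro Henstock_Kurzweil_Integration.integral_combine integrable_continuous_real
          continuous_on_subset[OF cont]) auto
    moreover have "{p i..p (i + 1)} = {c + i * \<Delta> - \<Delta> / 2..c + i * \<Delta> + \<Delta> / 2}"
      by (simp add: p_def algebra_simps)
    ultimately show ?thesis by (simp add: G_def)
  qed
  then have "(\<Sum>i\<in>{-k..k}. integral {c + i * \<Delta> - \<Delta> / 2..c + i * \<Delta> + \<Delta> / 2} f) = G (p (k + 1)) - G (p (-k))"
    using sum_int_telescope[of "-k" k "\<lambda>i. G (p i)"] k by simp
  also have "\<dots> = integral {c - (k + 1/2) * \<Delta>..c + (k + 1/2) * \<Delta>} f"
    by (simp add: G_def p_def algebra_simps)
  finally show ?thesis ..
qed

lemma integral_symmetric_interval_diff_le: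
  fixes f :: "real \<Rightarrow> real"
  assumes cont: "continuous_on UNIV f" and bound: "\<And>x. \<bar>f x\<bar> \<le> B" and "0 \<le> r" "0 \<le> s"
  shows "\<bar>integral {c - r..c + r} f - integral {c - s..c + s} f\<bar> \<le> 2 * B * \<bar>r - s\<bar>"
proof -
  have integral_le: "\<bar>integral {a..b} f\<bar> \<le> B * (b - a)" if "a \<le> b" for a b
  proof -
    have "norm (integral {a..b} f) \<le> B * (b - a)"
      by (rule integral_bound[OF that continuous_on_subset[OF cont subset_UNIV]]) (use bound in simp)
    then show ?thesis by simp
  qed
  have outer_le: "\<bar>integral {c - r..c + r} f - integral {c - s..c + s} f\<bar> \<le> 2 * B * (r - s)"
    if "0 \<le> s" "s \<le> r" for r s
  proof -
    have "integral {c - r..c - s} f + integral {c - s..c + r} f = integral {c - r..c + r} f"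
      "integral {c - s..c + s} f + integral {c + s..c + r} f = integral {c - s..c + r} f"
      using that by (intro Henstock_Kurzweil_Integration.integral_combine integrable_continuous_real
          continuous_on_subset[OF cont]; simp)+
    moreover have "\<bar>integral {c - r..c - s} f\<bar> \<le> B * (r - s)" "\<bar>integral {c + s..c + r} f\<bar> \<le> B * (r - s)"
      using integral_le[of "c - r" "c - s"] integral_le[of "c + s" "c + r"] that by simp_all
    ultimately show ?thesis unfolding abs_le_iff by linarith
  qed
  show ?thesis
    using outer_le[of s r] outer_le[of r s] assms(3,4) by (cases "s \<le> r") (auto simp: abs_minus_commute)
qed

(* The nodes c + i Delta, |i| <= floor (h / Delta), are the midpoints of cells of width Delta
   covering [c - h, c + h] up to less than Delta / 2 at either end. *)
definition grid_sum :: "(real \<Rightarrow> real) \<Rightarrow> real \<Rightarrow> real \<Rightarrow> real \<Rightarrow> real" where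
  "grid_sum f c h \<Delta> = \<Delta> * (\<Sum>i\<in>{-\<lfloor>h / \<Delta>\<rfloor>..\<lfloor>h / \<Delta>\<rfloor>}. f (c + of_int i * \<Delta>))"

lemma grid_sum_approx_integral:
  fixes f :: "real \<Rightarrow> real"
  assumes \<Delta>: "0 < \<Delta>" and h: "0 \<le> h"
    and lip: "L-lipschitz_on UNIV f" and bound: "\<And>x. \<bar>f x\<bar> \<le> B"
  shows "\<bar>grid_sum f c h \<Delta> - integral {c - h..c + h} f\<bar> \<le> (L * (h + \<Delta>) + B) * \<Delta>"
proof -
  define k where "k = \<lfloor>h / \<Delta>\<rfloor>"
  have k: "0 \<le> k" "k * \<Delta> \<le> h" "h < (k + 1) * \<Delta>"
    using h \<Delta> floor_divide_lower[OF \<Delta>, of h] floor_divide_upper[OF \<Delta>, of h]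
    by (auto simp: k_def)
  have L: "0 \<le> L" using lip by (rule lipschitz_on_nonneg)
  have cont: "continuous_on UNIV f" using lip by (rule lipschitz_on_continuous_on)
  have "\<bar>grid_sum f c h \<Delta> - integral {c - (k + 1/2) * \<Delta>..c + (k + 1/2) * \<Delta>} f\<bar>
      = \<bar>\<Sum>i\<in>{-k..k}. \<Delta> * f (c + i * \<Delta>) - integral {c + i * \<Delta> - \<Delta> / 2..c + i * \<Delta> + \<Delta> / 2} f\<bar>"
    by (simp add: grid_sum_def k_def[symmetric] integral_eq_sum_cells[OF cont less_imp_le[OF \<Delta>] k(1)]
        sum_subtractf sum_distrib_left)
  also have "\<dots> \<le> (\<Sum>i\<in>{-k..k}. L * (\<Delta> / 2) * \<Delta>)"
    using integral_midpoint_error[OF lip] \<Delta>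
    by (intro order_trans[OF sum_abs] sum_mono) (simp add: abs_minus_commute)
  also have "\<dots> = (2 * k + 1) * \<Delta> * (L * \<Delta> / 2)"
    using k by (simp add: algebra_simps)
  also have "\<dots> \<le> (2 * h + \<Delta>) * (L * \<Delta> / 2)"
    using k L \<Delta> by (intro mult_right_mono) (auto simp: algebra_simps)
  also have "\<dots> \<le> L * (h + \<Delta>) * \<Delta>"
    using L \<Delta> by (simp add: algebra_simps)
  finally have cells: "\<bar>grid_sum f c h \<Delta> - integral {c - (k + 1/2) * \<Delta>..c + (k + 1/2) * \<Delta>} f\<bar>
      \<le> L * (h + \<Delta>) * \<Delta>" .
  have "\<bar>(k + 1/2) * \<Delta> - h\<bar> \<le> \<Delta> / 2"
    using k unfolding abs_le_iff by (auto simp: algebra_simps)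
  then have "2 * B * \<bar>(k + 1/2) * \<Delta> - h\<bar> \<le> 2 * B * (\<Delta> / 2)"
    using bound[of c] by (intro mult_left_mono) auto
  then have ends: "\<bar>integral {c - (k + 1/2) * \<Delta>..c + (k + 1/2) * \<Delta>} f - integral {c - h..c + h} f\<bar> \<le> B * \<Delta>"
    using integral_symmetric_interval_diff_le[OF cont bound, of "(k + 1/2) * \<Delta>" h c] k \<Delta> h by simp
  show ?thesis
    using cells ends unfolding abs_le_iff by (simp add: algebra_simps)
qed

lemma grid_node_mem:
  fixes c \<Delta> h :: real and i j k :: int
  assumes \<Delta>: "0 \<le> \<Delta>" and k: "k * \<Delta> \<le> h" and i: "-k + j \<le> i" "i \<le> k - j"
  shows "c + i * \<Delta> \<in> {c - h + j * \<Delta>..c + h - j * \<Delta>}"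
proof -
  have "(-k + j) * \<Delta> \<le> i * \<Delta>" "i * \<Delta> \<le> (k - j) * \<Delta>"
    using i \<Delta> by (intro mult_right_mono; simp only: of_int_le_iff)+
  then show ?thesis using k by (auto simp: algebra_simps)
qed

lemma grid_sum_abs_le:
  fixes e :: "real \<Rightarrow> real"
  assumes \<Delta>: "0 < \<Delta>" and h: "0 \<le> h" and \<theta>: "0 \<le> \<theta>" and \<epsilon>: "0 \<le> \<epsilon>"
    and bound: "\<And>x. x \<in> {c - h..c + h} \<Longrightarrow> \<bar>e x\<bar> \<le> K"
    and small: "\<And>x. x \<in> {c - h + \<theta>..c + h - \<theta>} \<Longrightarrow> \<bar>e x\<bar> \<le> \<epsilon>"
  shows "grid_sum (\<lambda>x. \<bar>e x\<bar>) c h \<Delta> \<le> (2 * h + \<Delta>) * \<epsilon> + 2 * K * (\<theta> + \<Delta>)"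
proof -
  \<comment> \<open>Only the nodes within \<theta> of an endpoint, at most 2 (\<theta> / \<Delta> + 1) of them, may exceed \<epsilon>.\<close>
  define k where "k = \<lfloor>h / \<Delta>\<rfloor>"
  have k: "0 \<le> k" "k * \<Delta> \<le> h"
    using h \<Delta> floor_divide_lower[OF \<Delta>, of h] by (auto simp: k_def)
  define j where "j = \<lfloor>\<theta> / \<Delta>\<rfloor>"
  have j: "0 \<le> j" "j * \<Delta> \<le> \<theta>" "\<theta> < (j + 1) * \<Delta>"
    using \<theta> \<Delta> floor_divide_lower[OF \<Delta>, of \<theta>] floor_divide_upper[OF \<Delta>, of \<theta>]
    by (auto simp: j_def)
  define I where "I = {-k..k}"
  define near where "near = {-k..-k + j} \<union> {k - j..k}"
  have node_in: "c + i * \<Delta> \<in> {c - h..c + h}" if "i \<in> I" for i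
    using grid_node_mem[of \<Delta> k h 0 i c] that \<Delta> k by (simp add: I_def)
  have node_inner: "c + i * \<Delta> \<in> {c - h + \<theta>..c + h - \<theta>}" if "i \<in> I - near" for i
    using grid_node_mem[of \<Delta> k h "j + 1" i c] that \<Delta> k j by (auto simp: I_def near_def algebra_simps)
  have "(\<Sum>i\<in>I. \<bar>e (c + i * \<Delta>)\<bar>) = (\<Sum>i\<in>I \<inter> near. \<bar>e (c + i * \<Delta>)\<bar>) + (\<Sum>i\<in>I - near. \<bar>e (c + i * \<Delta>)\<bar>)"
    by (rule sum.Int_Diff) (simp add: I_def)
  also have "\<dots> \<le> card (I \<inter> near) * K + card (I - near) * \<epsilon>"
    using node_in node_inner bound small by (intro add_mono sum_bounded_above) auto
  also have "\<dots> \<le> (2 * (j + 1)) * K + (2 * k + 1) * \<epsilon>"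
  proof (intro add_mono mult_right_mono)
    have "card (I \<inter> near) \<le> card {-k..-k + j} + card {k - j..k}"
      by (rule order_trans[OF card_mono card_Un_le]) (auto simp: near_def)
    also have "\<dots> = nat (2 * (j + 1))" using j by simp
    finally have "real (card (I \<inter> near)) \<le> real (nat (2 * (j + 1)))" by (simp only: of_nat_le_iff)
    then show "real (card (I \<inter> near)) \<le> 2 * (j + 1)" using j by simp
    have "card (I - near) \<le> card I" by (rule card_mono) (auto simp: I_def)
    then show "real (card (I - near)) \<le> 2 * k + 1" using k by (simp add: I_def)
  qed (use bound[of c] h \<epsilon> in auto)
  finally have sum_le: "(\<Sum>i\<in>I. \<bar>e (c + i * \<Delta>)\<bar>) \<le> (2 * (j + 1)) * K + (2 * k + 1) * \<epsilon>" .
  have "grid_sum (\<lambda>x. \<bar>e x\<bar>) c h \<Delta> \<le> \<Delta> * ((2 * (j + 1)) * K + (2 * k + 1) * \<epsilon>)"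
    unfolding grid_sum_def k_def[symmetric] I_def[symmetric] using \<Delta> by (intro mult_left_mono[OF sum_le]) simp
  also have "\<dots> = 2 * K * (j * \<Delta> + \<Delta>) + (2 * (k * \<Delta>) + \<Delta>) * \<epsilon>"
    by (simp add: algebra_simps)
  also have "\<dots> \<le> 2 * K * (\<theta> + \<Delta>) + (2 * h + \<Delta>) * \<epsilon>"
    using j k \<epsilon> bound[of c] h by (intro add_mono mult_left_mono mult_right_mono) auto
  finally show ?thesis by simp
qed

lemma grid_sum_diff: "grid_sum (\<lambda>x. f x - g x) c h \<Delta> = grid_sum f c h \<Delta> - grid_sum g c h \<Delta>"
  by (simp add: grid_sum_def sum_subtractf right_diff_distrib)

lemma abs_grid_sum_le: "0 \<le> \<Delta> \<Longrightarrow> \<bar>grid_sum f c h \<Delta>\<bar> \<le> grid_sum (\<lambda>x. \<bar>f x\<bar>) c h \<Delta>"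
  by (simp add: grid_sum_def abs_mult mult_left_mono)

lemma grid_sum_perturbed_approx_integral:
  fixes f g :: "real \<Rightarrow> real"
  assumes \<Delta>: "0 < \<Delta>" and h: "0 \<le> h" and \<theta>: "0 \<le> \<theta>" and \<epsilon>: "0 \<le> \<epsilon>"
    and lip: "L-lipschitz_on UNIV f" and f_bound: "\<And>x. \<bar>f x\<bar> \<le> B"
    and far: "\<And>x. x \<in> {c - h..c + h} \<Longrightarrow> \<bar>g x - f x\<bar> \<le> K"
    and near: "\<And>x. x \<in> {c - h + \<theta>..c + h - \<theta>} \<Longrightarrow> \<bar>g x - f x\<bar> \<le> \<epsilon>"
  shows "\<bar>grid_sum g c h \<Delta> - integral {c - h..c + h} f\<bar>
    \<le> (L * (h + \<Delta>) + B) * \<Delta> + ((2 * h + \<Delta>) * \<epsilon> + 2 * K * (\<theta> + \<Delta>))"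
proof -
  have "\<bar>grid_sum g c h \<Delta> - grid_sum f c h \<Delta>\<bar> \<le> grid_sum (\<lambda>x. \<bar>g x - f x\<bar>) c h \<Delta>"
    using abs_grid_sum_le[of \<Delta> "\<lambda>x. g x - f x"] \<Delta> by (simp add: grid_sum_diff)
  also have "\<dots> \<le> (2 * h + \<Delta>) * \<epsilon> + 2 * K * (\<theta> + \<Delta>)"
    by (rule grid_sum_abs_le[OF \<Delta> h \<theta> \<epsilon> far near])
  finally show ?thesis
    using grid_sum_approx_integral[OF \<Delta> h lip f_bound, of c] by linarith
qed

lemma tendsto_grid_sum:
  fixes \<phi> :: "'a \<Rightarrow> real \<Rightarrow> real" and f :: "real \<Rightarrow> real" and \<Delta> :: "'a \<Rightarrow> real"
  assumes unif: "\<And>\<theta>. 0 < \<theta> \<Longrightarrow> uniform_limit {c - h + \<theta>..c + h - \<theta>} \<phi> f F"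
    and bounded: "eventually (\<lambda>t. \<forall>x\<in>{c - h..c + h}. \<bar>\<phi> t x\<bar> \<le> K) F"
    and lip: "L-lipschitz_on UNIV f" and f_bound: "\<And>x. \<bar>f x\<bar> \<le> B"
    and \<Delta>_lim: "(\<Delta> \<longlongrightarrow> 0) F" and \<Delta>_pos: "eventually (\<lambda>t. 0 < \<Delta> t) F"
    and h: "0 \<le> h"
  shows "((\<lambda>t. grid_sum (\<phi> t) c h (\<Delta> t)) \<longlongrightarrow> integral {c - h..c + h} f) F"
proof (rule tendstoI)
  fix \<epsilon> :: real
  assume \<epsilon>: "0 < \<epsilon>"
  define K' where "K' = \<bar>K\<bar> + B"
  have K': "0 \<le> K'" using f_bound[of 0] by (simp add: K'_def)
  define \<eta> where "\<eta> = \<epsilon> / (4 * (h + K' + 1))"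
  have \<eta>: "0 < \<eta>" using \<epsilon> h K' by (simp add: \<eta>_def)
  have "(2 * h + 2 * K') * \<eta> \<le> 2 * (h + K' + 1) * \<eta>" using \<eta> by (intro mult_right_mono) auto
  also have "\<dots> = \<epsilon> / 2" using h K' by (simp add: \<eta>_def field_simps)
  finally have "(2 * h + 2 * K') * \<eta> < \<epsilon>" using \<epsilon> by linarith
  moreover have "((\<lambda>t. (L * (h + \<Delta> t) + B) * \<Delta> t + ((2 * h + \<Delta> t) * \<eta> + 2 * K' * (\<eta> + \<Delta> t)))
      \<longlongrightarrow> (2 * h + 2 * K') * \<eta>) F"
    by (auto intro!: tendsto_eq_intros \<Delta>_lim simp: algebra_simps)
  ultimately have "eventually (\<lambda>t. (L * (h + \<Delta> t) + B) * \<Delta> t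
      + ((2 * h + \<Delta> t) * \<eta> + 2 * K' * (\<eta> + \<Delta> t)) < \<epsilon>) F"
    by (intro order_tendstoD)
  then show "eventually (\<lambda>t. dist (grid_sum (\<phi> t) c h (\<Delta> t)) (integral {c - h..c + h} f) < \<epsilon>) F"
    using uniform_limitD[OF unif[OF \<eta>] \<eta>] bounded \<Delta>_pos
  proof eventually_elim
    case (elim t)
    have "\<bar>grid_sum (\<phi> t) c h (\<Delta> t) - integral {c - h..c + h} f\<bar>
      \<le> (L * (h + \<Delta> t) + B) * \<Delta> t + ((2 * h + \<Delta> t) * \<eta> + 2 * K' * (\<eta> + \<Delta> t))"
    proof (rule grid_sum_perturbed_approx_integral[OF _ h _ _ lip f_bound])
      show "\<bar>\<phi> t x - f x\<bar> \<le> K'" if "x \<in> {c - h..c + h}" for x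
      proof -
        have "\<bar>\<phi> t x\<bar> \<le> K" using elim that by auto
        then show ?thesis using f_bound[of x] unfolding K'_def by arith
      qed
      show "\<bar>\<phi> t x - f x\<bar> \<le> \<eta>" if "x \<in> {c - h + \<eta>..c + h - \<eta>}" for x
        using elim that by (auto simp: dist_real_def less_imp_le)
    qed (use elim \<eta> in auto)
    with elim show ?case by (simp add: dist_real_def)
  qed
qed

lemma abs_sin_cos_power_le: "\<bar>(sin x * cos x :: real) ^ m\<bar> \<le> 1"
proof -
  have "\<bar>sin x * cos x\<bar> \<le> 1" unfolding abs_mult by (intro mult_le_one) auto
  then show ?thesis by (simp add: power_abs power_le_one)
qed

lemma lipschitz_sin_cos_power: "(real m)-lipschitz_on UNIV (\<lambda>x::real. (sin x * cos x) ^ m)"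
proof -
  have "((\<lambda>x. sin x * cos x) has_real_derivative cos (2 * z)) (at z)" for z
    by (auto intro!: derivative_eq_intros simp: cos_double power2_eq_square)
  from DERIV_power[OF this, of m]
  have deriv: "((\<lambda>x. (sin x * cos x) ^ m) has_real_derivative
      real m * (cos (2 * z) * (sin z * cos z) ^ (m - 1))) (at z)" for z
    by simp
  have deriv_bound: "norm (real m * (cos (2 * z) * (sin z * cos z) ^ (m - 1))) \<le> real m" for z
    using abs_sin_cos_power_le[of z "m - 1"] abs_cos_le_one[of "2 * z"]
    by (simp add: abs_mult mult_le_one mult_left_le)
  show ?thesis
    using field_differentiable_bound[OF convex_UNIV deriv deriv_bound]
    by (intro lipschitz_onI) (auto simp: dist_real_def)
qed

lemma integral_sin_cos_power:
  assumes m: "1 \<le> m"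
  shows "integral {0..pi / 2} (\<lambda>x. (sin x * cos x) ^ m) = Beta ((m + 1) / 2) ((m + 1) / 2) / 2"
proof -
  define f where "f t = sqrt (t * (1 - t)) ^ (m - 1)" for t :: real
  define g where "g x = sin x ^ 2" for x :: real
  have f_cont: "continuous_on {0..1} f" unfolding f_def by (intro continuous_intros)
  have g_deriv: "(g has_field_derivative (2 * sin x * cos x)) (at x within {0..pi / 2})" for x
    unfolding g_def by (auto intro!: derivative_eq_intros)
  have g_range: "g ` {0..pi / 2} \<subseteq> {0..1}"
    unfolding g_def by (auto simp: abs_square_le_1)
  have "((\<lambda>x. (2 * sin x * cos x) *\<^sub>R f (g x)) has_integral integral {g 0..g (pi / 2)} f) {0..pi / 2}"
    by (rule has_integral_substitution[OF _ _ g_range f_cont g_deriv]) (auto simp: g_def)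
  moreover have "(2 * sin x * cos x) *\<^sub>R f (g x) = 2 * (sin x * cos x) ^ m" if "x \<in> {0..pi / 2}" for x
  proof -
    have "0 \<le> sin x" "0 \<le> cos x" using that by (auto intro!: sin_ge_zero cos_ge_zero)
    moreover have "sin x ^ 2 * (1 - sin x ^ 2) = (sin x * cos x) ^ 2"
      by (simp add: cos_squared_eq power_mult_distrib)
    ultimately have "f (g x) = (sin x * cos x) ^ (m - 1)"
      unfolding f_def g_def by simp
    then show ?thesis using m by (simp add: power_eq_if)
  qed
  ultimately have "((\<lambda>x. 2 * (sin x * cos x) ^ m) has_integral integral {0..1} f) {0..pi / 2}"
    by (subst has_integral_cong[symmetric]) (auto simp: g_def)
  moreover have "(f has_integral Beta ((m + 1) / 2) ((m + 1) / 2)) {0..1}"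
  proof (rule has_integral_spike_finite[OF _ _ has_integral_Beta_real])
    fix t :: real
    assume "t \<in> {0..1} - {0, 1}"
    then have t: "0 < t" "t < 1" by auto
    have "f t = ((t * (1 - t)) powr (1/2)) powr (real (m - 1))"
      using t by (simp add: f_def powr_half_sqrt powr_realpow)
    also have "\<dots> = (t * (1 - t)) powr ((real m - 1) / 2)"
      using m by (simp add: powr_powr)
    also have "\<dots> = t powr ((m + 1) / 2 - 1) * (1 - t) powr ((m + 1) / 2 - 1)"
      using t by (subst powr_mult) (auto simp: field_simps)
    finally show "f t = t powr (real (m + 1) / 2 - 1) * (1 - t) powr (real (m + 1) / 2 - 1)"
      by simp
  qed auto
  ultimately have "integral {0..pi / 2} (\<lambda>x. 2 * (sin x * cos x) ^ m) = Beta ((m + 1) / 2) ((m + 1) / 2)"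
    by (metis integral_unique)
  then show ?thesis by (simp add: algebra_simps)
qed

lemma sphere_area_double:
  assumes n: "1 \<le> n"
  shows "sphere_area n ^ 2 * (Beta (n / 2) (n / 2) / 2) = sphere_area (2 * n)"
proof -
  have Gamma_half: "Gamma (1 + real n / 2) = real n / 2 * Gamma (real n / 2)"
    using Gamma_plus1[of "real n / 2"] n by (simp add: add.commute nonpos_Ints_def)
  have Gamma_full: "Gamma (1 + real (2 * n) / 2) = real n * Gamma (real n)"
    using Gamma_plus1[of "real n"] n by (simp add: add.commute nonpos_Ints_def)
  have "(pi powr (real n / 2)) ^ 2 = pi powr (real n)"
    by (simp add: powr_realpow[symmetric] powr_powr)
  moreover have "Gamma (real n / 2) > 0" "Gamma (real n) > 0" using n by auto
  ultimately show ?thesis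
    unfolding sphere_area_def Beta_def Gamma_half Gamma_full power_mult_distrib power_divide
    using n by (simp add: field_simps power2_eq_square less_imp_neq[symmetric])
qed

lemma sphere_area_pos: "0 < n \<Longrightarrow> 0 < sphere_area n"
  by (simp add: sphere_area_def)

lemma spherical_code_mono: "d' \<le> d \<Longrightarrow> spherical_code d A \<Longrightarrow> spherical_code d' A"
  by (force simp: spherical_code_def)

lemma spherical_code_card_bounded:
  assumes e: "0 < e"
  shows "\<exists>N. \<forall>A::'a::euclidean_space set. spherical_code e A \<longrightarrow> card A \<le> N"
proof -
  \<comment> \<open>Distinct points of the code lie in distinct balls of a finite cover by balls of radius e/2.\<close>
  obtain T where T: "finite T" "sphere (0::'a) 1 \<subseteq> (\<Union>t\<in>T. ball t (e / 2))"
  proof (rule compactE_image[OF compact_sphere, of "sphere 0 1" "\<lambda>t. ball t (e / 2)"])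
    show "sphere 0 1 \<subseteq> (\<Union>t\<in>sphere 0 1. ball t (e / 2))" using e by force
  qed auto
  have "card A \<le> card T" if A: "spherical_code e A" for A :: "'a set"
  proof -
    have "\<forall>a\<in>A. \<exists>t\<in>T. a \<in> ball t (e / 2)"
      using A T(2) unfolding spherical_code_def by blast
    then obtain \<tau> where \<tau>: "\<And>a. a \<in> A \<Longrightarrow> \<tau> a \<in> T \<and> dist (\<tau> a) a < e / 2"
      unfolding mem_ball by metis
    have "inj_on \<tau> A"
    proof (rule inj_onI, rule ccontr)
      fix a b assume ab: "a \<in> A" "b \<in> A" "\<tau> a = \<tau> b" "a \<noteq> b"
      have "dist a b \<le> dist (\<tau> a) a + dist (\<tau> b) b" using ab(3) dist_triangle3[of a b "\<tau> a"] by simp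
      also have "\<dots> < e" using \<tau>[OF ab(1)] \<tau>[OF ab(2)] by simp
      finally show False using A ab by (force simp: spherical_code_def)
    qed
    then show ?thesis using \<tau> T(1) by (intro card_inj_on_le) auto
  qed
  then show ?thesis by blast
qed

lemma code_density_bounded:
  fixes C :: "real \<Rightarrow> 'a::euclidean_space set"
  assumes codes: "\<And>d. 0 < d \<Longrightarrow> spherical_code d (C d)"
    and lim: "((\<lambda>x. real (card (C x)) * x ^ m) \<longlongrightarrow> L) (at_right 0)"
  shows "\<exists>B. \<forall>x. 0 < x \<longrightarrow> x \<le> 2 \<longrightarrow> real (card (C x)) * x ^ m \<le> B"
proof -
  have "eventually (\<lambda>x. real (card (C x)) * x ^ m < L + 1) (at_right 0)"
    using lim by (rule order_tendstoD) simp
  then obtain b where b: "0 < b" and near: "\<And>x. 0 < x \<Longrightarrow> x < b \<Longrightarrow> real (card (C x)) * x ^ m < L + 1"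
    unfolding eventually_at_right_field by auto
  obtain N where N: "\<And>A::'a set. spherical_code b A \<Longrightarrow> card A \<le> N"
    using spherical_code_card_bounded[OF b] by blast
  have "real (card (C x)) * x ^ m \<le> max (L + 1) (real N * 2 ^ m)" if x: "0 < x" "x \<le> 2" for x
  proof (cases "x < b")
    case True
    then show ?thesis using near[OF x(1) True] by simp
  next
    case False
    then have "card (C x) \<le> N" using codes[OF x(1)] by (intro N spherical_code_mono[of b x]) auto
    moreover have "x ^ m \<le> 2 ^ m" using x by (intro power_mono) auto
    ultimately have "real (card (C x)) * x ^ m \<le> real N * 2 ^ m" using x by (intro mult_mono) auto
    then show ?thesis by simp
  qed
  then show ?thesis by blast
qed

definition schf_step :: "real \<Rightarrow> real" where
  "schf_step d = 2 * arcsin (d / 2)"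

(* The index bound floor (t / 2) of the construction equals floor ((pi / 4) / Delta), so the layers
   eta_i are exactly the grid nodes of [0, pi / 2]. *)
lemma schf_card_grid_sum:
  "schf_step d * real (schf_card M d) =
     grid_sum (\<lambda>x. real (card_div M d (cos x)) * real (card_div M d (sin x))) (pi / 4) (pi / 4) (schf_step d)"
proof -
  have "\<lfloor>pi / (4 * arcsin (d / 2))\<rfloor> div 2 = \<lfloor>(pi / 4) / schf_step d\<rfloor>"
    using floor_divide_real_eq_div[of 2 "pi / (4 * arcsin (d / 2))"] by (simp add: schf_step_def)
  then show ?thesis by (simp add: schf_card_def grid_sum_def schf_step_def Let_def)
qed

lemma schf_step_pos: "0 < d \<Longrightarrow> d \<le> 2 \<Longrightarrow> 0 < schf_step d"
  using arcsin_less_arcsin[of 0 "d / 2"] by (simp add: schf_step_def)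

lemma schf_step_tendsto: "(schf_step \<longlongrightarrow> 0) (at_right 0)"
proof -
  have "((\<lambda>d::real. d / 2) \<longlongrightarrow> 0) (at_right 0)" by (auto intro!: tendsto_eq_intros)
  then have "((\<lambda>d. arcsin (d / 2)) \<longlongrightarrow> arcsin 0) (at_right 0)"
    using isCont_tendsto_compose[OF isCont_arcsin[of 0]] by simp
  then show ?thesis unfolding schf_step_def using tendsto_mult_right_zero by fastforce
qed

lemma schf_step_ratio: "((\<lambda>d. d / schf_step d) \<longlongrightarrow> 1) (at_right 0)"
proof -
  have "(arcsin has_field_derivative 1) (at 0)"
    using DERIV_arcsin[of 0] by simp
  then have "((\<lambda>y. arcsin y / y) \<longlongrightarrow> 1) (at 0)"
    unfolding has_field_derivative_iff by simp
  moreover have "filterlim (\<lambda>d::real. d / 2) (at 0) (at_right 0)"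
    by (rule filterlim_atI) (auto intro!: tendsto_eq_intros exI[of _ 1] simp: eventually_at_right_field)
  ultimately have "((\<lambda>d. arcsin (d / 2) / (d / 2)) \<longlongrightarrow> 1) (at_right 0)"
    by (rule filterlim_compose)
  then have "((\<lambda>d. inverse (arcsin (d / 2) / (d / 2))) \<longlongrightarrow> inverse 1) (at_right 0)"
    by (rule tendsto_inverse) simp
  then show ?thesis by (simp add: schf_step_def mult.commute)
qed

(* d^m times the size of the component code on the sphere of radius c of the foliation; it equals
   c^m M(d/c) (d/c)^m for c > 0, which is how the limit of M(x) x^m enters. *)
definition scaled_card_div :: "nat \<Rightarrow> (real \<Rightarrow> nat) \<Rightarrow> real \<Rightarrow> real \<Rightarrow> real" where
  "scaled_card_div m M d c = d ^ m * real (card_div M d c)"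

lemma scaled_card_div_le:
  fixes M :: "real \<Rightarrow> nat"
  assumes one_point: "\<And>x. 2 < x \<Longrightarrow> M x = 1"
    and bounded: "\<And>x. 0 < x \<Longrightarrow> x \<le> 2 \<Longrightarrow> real (M x) * x ^ m \<le> B"
    and d: "0 < d" "d \<le> 1" and c: "0 \<le> c" "c \<le> 1"
  shows "scaled_card_div m M d c \<le> max 1 B"
proof (cases "c = 0 \<or> 2 < d / c")
  case True
  then have "card_div M d c = 1" by (auto simp: card_div_def one_point)
  moreover have "d ^ m \<le> 1" using d by (simp add: power_le_one)
  ultimately show ?thesis by (simp add: scaled_card_div_def)
next
  case False
  then have c_pos: "0 < c" and "d / c \<le> 2" using c by auto
  have "d ^ m * real (card_div M d c) = c ^ m * (real (M (d / c)) * (d / c) ^ m)"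
    using c_pos by (simp add: card_div_def power_divide)
  also have "\<dots> \<le> 1 * (real (M (d / c)) * (d / c) ^ m)"
    using c d by (intro mult_right_mono power_le_one) auto
  also have "\<dots> \<le> B" using bounded[of "d / c"] c_pos d \<open>d / c \<le> 2\<close> by simp
  finally show ?thesis by (simp add: scaled_card_div_def)
qed

lemma uniform_limit_scaled_card_div:
  fixes M :: "real \<Rightarrow> nat"
  assumes lim: "((\<lambda>x. real (M x) * x ^ m) \<longlongrightarrow> L) (at_right 0)" and \<rho>: "0 < \<rho>"
  shows "uniform_limit {\<rho>..1} (scaled_card_div m M) (\<lambda>c. L * c ^ m) (at_right 0)"
  unfolding scaled_card_div_def
proof (rule uniform_limitI)
  fix e :: real
  assume e: "0 < e"
  obtain b where b: "0 < b" and near: "\<And>x. 0 < x \<Longrightarrow> x < b \<Longrightarrow> \<bar>real (M x) * x ^ m - L\<bar> < e"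
    using tendstoD[OF lim e] unfolding eventually_at_right_field dist_real_def by auto
  have "\<bar>d ^ m * real (card_div M d c) - L * c ^ m\<bar> < e"
    if d: "0 < d" "d < \<rho> * b" and c: "c \<in> {\<rho>..1}" for d c
  proof -
    have c_pos: "0 < c" using c \<rho> by simp
    have "d < c * b" using d c b by (meson atLeastAtMost_iff less_le_trans mult_right_mono less_imp_le)
    then have "d / c < b" using c_pos by (simp add: divide_less_eq mult.commute)
    have "d ^ m * real (card_div M d c) - L * c ^ m = c ^ m * (real (M (d / c)) * (d / c) ^ m - L)"
      using c_pos by (simp add: card_div_def field_simps)
    then have "\<bar>d ^ m * real (card_div M d c) - L * c ^ m\<bar> = c ^ m * \<bar>real (M (d / c)) * (d / c) ^ m - L\<bar>"
      using c_pos by (simp add: abs_mult)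
    also have "\<dots> \<le> \<bar>real (M (d / c)) * (d / c) ^ m - L\<bar>"
      using c c_pos by (intro mult_left_le_one_le power_le_one) auto
    also have "\<dots> < e" using near[of "d / c"] d c_pos \<open>d / c < b\<close> by simp
    finally show ?thesis .
  qed
  then show "\<forall>\<^sub>F d in at_right 0. \<forall>c\<in>{\<rho>..1}. dist (d ^ m * real (card_div M d c)) (L * c ^ m) < e"
    unfolding eventually_at_right_field dist_real_def using \<rho> b by (intro exI[of _ "\<rho> * b"]) auto
qed

lemma uniform_limit_scaled_card_div_sin_cos:
  fixes M :: "real \<Rightarrow> nat"
  assumes lim: "((\<lambda>x. real (M x) * x ^ m) \<longlongrightarrow> L) (at_right 0)" and \<theta>: "0 < \<theta>"
  shows "uniform_limit {\<theta>..pi / 2 - \<theta>} (\<lambda>d x. scaled_card_div m M d (cos x) * scaled_card_div m M d (sin x))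
           (\<lambda>x. L\<^sup>2 * (sin x * cos x) ^ m) (at_right 0)"
proof -
  define S where "S = {\<theta>..pi / 2 - \<theta>}"
  define \<rho> where "\<rho> = sin (min \<theta> (pi / 4))"
  have \<rho>: "0 < \<rho>" using \<theta> pi_gt3 by (auto simp: \<rho>_def intro!: sin_gt_zero)
  have sin_S: "sin \<in> S \<rightarrow> {\<rho>..1}"
    using \<theta> by (auto simp: S_def \<rho>_def intro!: sin_monotone_2pi_le)
  have cos_S: "cos \<in> S \<rightarrow> {\<rho>..1}"
    using \<theta> by (auto simp: S_def \<rho>_def cos_sin_eq intro!: sin_monotone_2pi_le)
  have bounded_limit: "bounded ((\<lambda>x. L * f x ^ m) ` S)" if "\<And>x. \<bar>f x\<bar> \<le> 1" for f :: "real \<Rightarrow> real"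
  proof (rule boundedI)
    fix y assume "y \<in> (\<lambda>x. L * f x ^ m) ` S"
    then obtain x where "y = L * f x ^ m" by blast
    moreover have "\<bar>f x ^ m\<bar> \<le> 1" using that[of x] by (simp add: power_abs power_le_one)
    ultimately show "norm y \<le> \<bar>L\<bar>" by (simp add: abs_mult mult_left_le)
  qed
  have "uniform_limit S (\<lambda>d x. scaled_card_div m M d (cos x) * scaled_card_div m M d (sin x))
      (\<lambda>x. L * cos x ^ m * (L * sin x ^ m)) (at_right 0)"
    by (rule uniform_lim_mult[OF uniform_limit_compose'[OF uniform_limit_scaled_card_div[OF lim \<rho>] cos_S]
          uniform_limit_compose'[OF uniform_limit_scaled_card_div[OF lim \<rho>] sin_S]
          bounded_limit bounded_limit]) simp_all
  moreover have "(\<lambda>x. L * cos x ^ m * (L * sin x ^ m)) = (\<lambda>x. L\<^sup>2 * (sin x * cos x) ^ m)"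
    by (simp add: fun_eq_iff power_mult_distrib power2_eq_square)
  ultimately show ?thesis by (simp add: S_def)
qed

lemma tendsto_schf_grid_sum:
  fixes M :: "real \<Rightarrow> nat"
  assumes one_point: "\<And>x. 2 < x \<Longrightarrow> M x = 1"
    and bounded: "\<And>x. 0 < x \<Longrightarrow> x \<le> 2 \<Longrightarrow> real (M x) * x ^ m \<le> B"
    and lim: "((\<lambda>x. real (M x) * x ^ m) \<longlongrightarrow> L) (at_right 0)"
  shows "((\<lambda>d. grid_sum (\<lambda>x. scaled_card_div m M d (cos x) * scaled_card_div m M d (sin x))
            (pi / 4) (pi / 4) (schf_step d)) \<longlongrightarrow> L\<^sup>2 * integral {0..pi / 2} (\<lambda>x. (sin x * cos x) ^ m)) (at_right 0)"
proof -
  have unif: "uniform_limit {pi / 4 - pi / 4 + \<theta>..pi / 4 + pi / 4 - \<theta>}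
      (\<lambda>d x. scaled_card_div m M d (cos x) * scaled_card_div m M d (sin x))
      (\<lambda>x. L\<^sup>2 * (sin x * cos x) ^ m) (at_right 0)" if "0 < \<theta>" for \<theta>
    using uniform_limit_scaled_card_div_sin_cos[OF lim that] by simp
  have "\<bar>scaled_card_div m M d (cos x) * scaled_card_div m M d (sin x)\<bar> \<le> max 1 B * max 1 B"
    if "0 < d" "d < 1" "x \<in> {0..pi / 2}" for d x
  proof -
    have "0 \<le> cos x" "0 \<le> sin x" using that by (auto intro!: cos_ge_zero sin_ge_zero)
    then have "scaled_card_div m M d (cos x) \<le> max 1 B" "scaled_card_div m M d (sin x) \<le> max 1 B"
      using that by (auto intro!: scaled_card_div_le one_point bounded)
    moreover have "0 \<le> scaled_card_div m M d (cos x)" "0 \<le> scaled_card_div m M d (sin x)"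
      using that by (simp_all add: scaled_card_div_def)
    ultimately show ?thesis by (simp add: abs_mult mult_mono)
  qed
  then have bounded_product: "eventually (\<lambda>d. \<forall>x\<in>{pi / 4 - pi / 4..pi / 4 + pi / 4}.
      \<bar>scaled_card_div m M d (cos x) * scaled_card_div m M d (sin x)\<bar> \<le> max 1 B * max 1 B) (at_right 0)"
    unfolding eventually_at_right_field by (intro exI[of _ 1]) auto
  have lipschitz: "(\<bar>L\<^sup>2\<bar> * real m)-lipschitz_on UNIV (\<lambda>x. L\<^sup>2 * (sin x * cos x) ^ m)"
    by (intro lipschitz_on_cmult_real lipschitz_sin_cos_power)
  have limit_bounded: "\<bar>L\<^sup>2 * (sin x * cos x) ^ m\<bar> \<le> L\<^sup>2" for x :: real
    using abs_sin_cos_power_le[of x m] by (simp add: abs_mult mult_left_le)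
  have step_pos: "eventually (\<lambda>d. 0 < schf_step d) (at_right 0)"
    unfolding eventually_at_right_field by (intro exI[of _ 2]) (auto intro: schf_step_pos)
  have "((\<lambda>d. grid_sum (\<lambda>x. scaled_card_div m M d (cos x) * scaled_card_div m M d (sin x)) (pi / 4) (pi / 4) (schf_step d))
      \<longlongrightarrow> integral {pi / 4 - pi / 4..pi / 4 + pi / 4} (\<lambda>x. L\<^sup>2 * (sin x * cos x) ^ m)) (at_right 0)"
    by (rule tendsto_grid_sum[OF unif bounded_product lipschitz limit_bounded schf_step_tendsto step_pos]) simp_all
  then show ?thesis by simp
qed

lemma schf_card_normalized:
  assumes "0 < d" "d \<le> 2"
  shows "real (schf_card M d) * (d / 2) ^ (2 * m + 1) =
    grid_sum (\<lambda>x. scaled_card_div m M d (cos x) * scaled_card_div m M d (sin x)) (pi / 4) (pi / 4) (schf_step d)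
      * (d / schf_step d) / 2 ^ (2 * m + 1)"
proof -
  have "grid_sum (\<lambda>x. scaled_card_div m M d (cos x) * scaled_card_div m M d (sin x)) (pi / 4) (pi / 4) (schf_step d)
      = d ^ (2 * m) * (schf_step d * real (schf_card M d))"
    unfolding schf_card_grid_sum
    by (simp add: scaled_card_div_def grid_sum_def sum_distrib_left power_mult power2_eq_square algebra_simps)
  then show ?thesis
    using schf_step_pos[OF assms] by (simp add: power_add field_simps)
qed

lemma tendsto_card_power_of_density:
  assumes "((\<lambda>d. real (M d) / sphere_area (m + 1) * (d / 2) ^ m) \<longlongrightarrow> D) F"
  shows "((\<lambda>d. real (M d) * d ^ m) \<longlongrightarrow> D * sphere_area (m + 1) * 2 ^ m) F"
proof -
  have "real (M d) / sphere_area (m + 1) * (d / 2) ^ m * (sphere_area (m + 1) * 2 ^ m) = real (M d) * d ^ m" for d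
    using sphere_area_pos[of "m + 1"] by (simp add: power_divide)
  then show ?thesis
    using tendsto_mult_right[OF assms, of "sphere_area (m + 1) * 2 ^ m"] by (simp add: mult.assoc)
qed

lemma schf_limit_constant:
  assumes m: "1 \<le> m"
  shows "(D * sphere_area (m + 1) * 2 ^ m)\<^sup>2 * integral {0..pi / 2} (\<lambda>x. (sin x * cos x) ^ m)
    / 2 ^ (2 * m + 1) / sphere_area (2 * (m + 1)) = D ^ 2 / 2"
proof -
  have "sphere_area (m + 1) ^ 2 * integral {0..pi / 2} (\<lambda>x. (sin x * cos x) ^ m) = sphere_area (2 * (m + 1))"
    using sphere_area_double[of "m + 1"] unfolding integral_sin_cos_power[OF m] by (simp add: add.commute)
  then have "(D * sphere_area (m + 1) * 2 ^ m)\<^sup>2 * integral {0..pi / 2} (\<lambda>x. (sin x * cos x) ^ m)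
      = D ^ 2 * 2 ^ (2 * m) * sphere_area (2 * (m + 1))"
    by (simp add: power_mult_distrib power_mult[symmetric] mult.commute mult.left_commute)
  moreover have "0 < sphere_area (2 * (m + 1))" by (simp add: sphere_area_pos)
  ultimately show ?thesis by (simp add: power_add)
qed

lemma tendsto_schf_density:
  fixes M :: "real \<Rightarrow> nat"
  assumes m: "1 \<le> m"
    and one_point: "\<And>x. 2 < x \<Longrightarrow> M x = 1"
    and bounded: "\<And>x. 0 < x \<Longrightarrow> x \<le> 2 \<Longrightarrow> real (M x) * x ^ m \<le> B"
    and density: "((\<lambda>d. real (M d) / sphere_area (m + 1) * (d / 2) ^ m) \<longlongrightarrow> D) (at_right 0)"
  shows "((\<lambda>d. real (schf_card M d) / sphere_area (2 * (m + 1)) * (d / 2) ^ (2 * m + 1)) \<longlongrightarrow> D ^ 2 / 2)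
           (at_right 0)"
proof -
  define L where "L = D * sphere_area (m + 1) * 2 ^ m"
  define S where "S = sphere_area (2 * (m + 1))"
  define I where "I = integral {0..pi / 2} (\<lambda>x. (sin x * cos x) ^ m)"
  define G where "G d = grid_sum (\<lambda>x. scaled_card_div m M d (cos x) * scaled_card_div m M d (sin x))
    (pi / 4) (pi / 4) (schf_step d)" for d
  have S: "0 < S" by (simp add: S_def sphere_area_pos)
  have limit: "((\<lambda>d. G d * (d / schf_step d) / 2 ^ (2 * m + 1) / S) \<longlongrightarrow> L\<^sup>2 * I * 1 / 2 ^ (2 * m + 1) / S) (at_right 0)"
    using S tendsto_schf_grid_sum[OF one_point bounded tendsto_card_power_of_density[OF density]]
    unfolding G_def I_def L_def by (intro tendsto_intros schf_step_ratio) auto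
  have limit_value: "L\<^sup>2 * I * 1 / 2 ^ (2 * m + 1) / S = D ^ 2 / 2"
    using schf_limit_constant[OF m, of D] by (simp add: L_def I_def S_def)
  have normalized_eq: "G d * (d / schf_step d) / 2 ^ (2 * m + 1) / S = real (schf_card M d) / S * (d / 2) ^ (2 * m + 1)"
    if "0 < d" "d \<le> 2" for d
  proof -
    have "real (schf_card M d) / S * (d / 2) ^ (2 * m + 1) = real (schf_card M d) * (d / 2) ^ (2 * m + 1) / S"
      by simp
    also have "\<dots> = G d * (d / schf_step d) / 2 ^ (2 * m + 1) / S"
      by (simp only: schf_card_normalized[OF that] G_def)
    finally show ?thesis by (rule sym)
  qed
  have "eventually (\<lambda>d. 0 < d \<and> d \<le> 2) (at_right (0::real))"
    unfolding eventually_at_right_field by (intro exI[of _ 2]) auto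
  then have normalized: "eventually (\<lambda>d. G d * (d / schf_step d) / 2 ^ (2 * m + 1) / S
      = real (schf_card M d) / S * (d / 2) ^ (2 * m + 1)) (at_right 0)"
    by (rule eventually_mono) (blast intro: normalized_eq)
  show ?thesis
    using Lim_transform_eventually[OF limit[unfolded limit_value] normalized] unfolding S_def .
qed

theorem proposition4:
  fixes C :: "real \<Rightarrow> (real ^ 'n) set" and D :: real
  assumes n2: "CARD('n) \<ge> 2"
    and codes: "\<And>d'. d' > 0 \<Longrightarrow> spherical_code d' (C d')"
    and one_point: "\<And>d'. d' > 2 \<Longrightarrow> card (C d') = 1"
    and dens: "((\<lambda>d. real (card (C d)) / sphere_area CARD('n) * (d / 2) ^ (CARD('n) - 1))
                 \<longlongrightarrow> D) (at_right 0)"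
  shows "((\<lambda>d. real (schf_card (\<lambda>d'. card (C d')) d) / sphere_area (2 * CARD('n))
                 * (d / 2) ^ (2 * CARD('n) - 1)) \<longlongrightarrow> D ^ 2 / 2) (at_right 0)"
proof -
  define m where "m = CARD('n) - 1"
  have n: "CARD('n) = m + 1" "1 \<le> m" using n2 by (auto simp: m_def)
  have density: "((\<lambda>d. real (card (C d)) / sphere_area (m + 1) * (d / 2) ^ m) \<longlongrightarrow> D) (at_right 0)"
    using dens by (simp add: n)
  obtain B where "\<And>x. 0 < x \<Longrightarrow> x \<le> 2 \<Longrightarrow> real (card (C x)) * x ^ m \<le> B"
    using code_density_bounded[OF codes tendsto_card_power_of_density[OF density]] by blast
  from tendsto_schf_density[OF n(2) one_point this density] show ?thesis
    by (simp add: n)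
qed

end
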